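(* Let $n\ge 2$ and let $G\subsetneq\mathbb{R}^n$ be a domain. Suppose that $G$ is $\varphi$-uniform for some strictly increasing homeomorphism $\varphi:[0,\infty)\to[0,\infty)$ with $\varphi(0)=0$, and that $G$ satisfies the twisted cone condition. Then $G$ is uniform.
   Context: For a domain $G\subsetneq\mathbb{R}^n$ and $x\in G$, $\delta(x)=\delta_G(x)$ denotes the Euclidean distance from $x$ to $\partial G$. All paths are rectifiable, $\ell(\gamma)$ denotes Euclidean length, and for points $a,b$ on a path $\gamma$, $\gamma[a,b]$ is the subpath between them. The quasihyperbolic metric is $k_G(x,y)=\inf_\gamma\int_\gamma \frac{|dz|}{\delta(z)}$, the infimum over rectifiable paths $\gamma$ joining $x$ and $y$ in $G$. The domain $G$ is $\varphi$-uniform if $k_G(x,y)\le\varphi\big(\frac{|x-y|}{\min\{\delta(x),\delta(y)\}}\big)$ for all $x,y\in G$. $G$ satisfies the twisted cone condition if there is a constant $c>0$ such that every $x,y\in G$ can be joined by a rectifiable path $\gamma\subset G$ with $\min\{\ell(\gamma[x,z]),\ell(\gamma[z,y])\}\le c\,\delta(z)$ for all $z\in\gamma$. $G$ is uniform if there is $C\ge1$ such that every $x,y\in G$ can be joined by a path $\gamma\subset G$ with (i) $\ell(\gamma)\le C|x-y|$ and (ii) $\delta(z)\ge \frac1C\min\{\ell(\gamma[x,z]),\ell(\gamma[z,y])\}$ for all $z\in\gamma$. *)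

theory Defs
  imports "HOL-Analysis.Analysis"
begin

definition bdist :: "'a::euclidean_space set \<Rightarrow> 'a \<Rightarrow> real" where
  "bdist G x = infdist x (frontier G)"

definition seg_length :: "(real \<Rightarrow> 'a::real_normed_vector) \<Rightarrow> real \<Rightarrow> real \<Rightarrow> ennreal" where
  "seg_length g a b =
     (SUP ts \<in> {ts. sorted ts \<and> ts \<noteq> [] \<and> hd ts = a \<and> last ts = b}.
        \<Sum>i<length ts - 1. ennreal (dist (g (ts ! i)) (g (ts ! Suc i))))"

definition path_len :: "(real \<Rightarrow> 'a::real_normed_vector) \<Rightarrow> ennreal" where
  "path_len g = seg_length g 0 1"

definition rectifiable_path :: "(real \<Rightarrow> 'a::real_normed_vector) \<Rightarrow> bool" where
  "rectifiable_path g \<longleftrightarrow> path g \<and> path_len g < \<infinity>"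

definition arclen_fun :: "(real \<Rightarrow> 'a::real_normed_vector) \<Rightarrow> real \<Rightarrow> real" where
  "arclen_fun g t = enn2real (seg_length g 0 (max 0 (min 1 t)))"

text \<open>Quasihyperbolic length: the line integral of 1/delta over g with respect
  to arc length, as a Lebesgue--Stieltjes integral against ds(t).\<close>
definition qh_length :: "'a::euclidean_space set \<Rightarrow> (real \<Rightarrow> 'a) \<Rightarrow> ennreal" where
  "qh_length G g = (\<integral>\<^sup>+ t \<in> {0..1}. ennreal (1 / bdist G (g t)) \<partial>interval_measure (arclen_fun g))"

definition qh_metric :: "'a::euclidean_space set \<Rightarrow> 'a \<Rightarrow> 'a \<Rightarrow> ennreal" where
  "qh_metric G x y =
     (INF g \<in> {g. rectifiable_path g \<and> path_image g \<subseteq> G \<and> pathstart g = x \<and> pathfinish g = y}.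
        qh_length G g)"

definition phi_uniform :: "(real \<Rightarrow> real) \<Rightarrow> 'a::euclidean_space set \<Rightarrow> bool" where
  "phi_uniform \<phi> G \<longleftrightarrow>
     (\<forall>x\<in>G. \<forall>y\<in>G. qh_metric G x y \<le> ennreal (\<phi> (dist x y / min (bdist G x) (bdist G y))))"

definition twisted_cone :: "'a::euclidean_space set \<Rightarrow> bool" where
  "twisted_cone G \<longleftrightarrow> (\<exists>c>0. \<forall>x\<in>G. \<forall>y\<in>G. \<exists>g.
      rectifiable_path g \<and> path_image g \<subseteq> G \<and> pathstart g = x \<and> pathfinish g = y \<and>
      (\<forall>t\<in>{0..1}. min (seg_length g 0 t) (seg_length g t 1) \<le> ennreal (c * bdist G (g t))))"

definition uniform_domain :: "'a::euclidean_space set \<Rightarrow> bool" where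
  "uniform_domain G \<longleftrightarrow> (\<exists>C\<ge>1. \<forall>x\<in>G. \<forall>y\<in>G. \<exists>g.
      rectifiable_path g \<and> path_image g \<subseteq> G \<and> pathstart g = x \<and> pathfinish g = y \<and>
      path_len g \<le> ennreal (C * dist x y) \<and>
      (\<forall>t\<in>{0..1}. ennreal (bdist G (g t)) \<ge> ennreal (1 / C) * min (seg_length g 0 t) (seg_length g t 1)))"

end

theory Submission
  imports Defs
begin

text \<open>If \<open>|x - y| \<le> \<delta>(x)/2\<close>, the segment from \<open>x\<close> to \<open>y\<close> is a uniform path. Otherwise
  take a twisted-cone path \<open>\<gamma>\<close> from \<open>x\<close> to \<open>y\<close>; if its length is at most \<open>2|x - y|\<close>, it is
  already uniform. If \<open>\<gamma>\<close> is long, let \<open>x'\<close>, \<open>y'\<close> be its points at arc length \<open>r = |x - y|\<close>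
  from the two ends. The cone condition gives \<open>\<delta>(x'), \<delta>(y') \<ge> r/c\<close>, and \<open>|x' - y'| \<le> 3r\<close>, so
  by \<open>\<phi>\<close>-uniformity \<open>x'\<close> and \<open>y'\<close> are joined by a path of quasihyperbolic length less than
  \<open>k/2\<close>, where \<open>\<phi>(3c) < k/2\<close>. A doubling argument shows that such a path is shorter than
  \<open>2^k \<delta>(x') \<le> 3 \<cdot> 2^k r\<close> and keeps distance at least \<open>2^-k \<delta>(y')\<close> from the boundary.
  Replacing the part of \<open>\<gamma>\<close> between \<open>x'\<close> and \<open>y'\<close> by this path gives a uniform path whose
  constant depends only on \<open>c\<close> and \<open>k\<close>.\<close>

section \<open>Length of a path via partitions\<close>

fun chord_sum :: "(real \<Rightarrow> 'a::real_normed_vector) \<Rightarrow> real list \<Rightarrow> real" where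
  "chord_sum g (s # t # ts) = dist (g s) (g t) + chord_sum g (t # ts)"
| "chord_sum g _ = 0"

definition partitions :: "real \<Rightarrow> real \<Rightarrow> real list set" where
  "partitions a b = {ts. sorted ts \<and> ts \<noteq> [] \<and> hd ts = a \<and> last ts = b}"

lemma chord_sum_nonneg: "0 \<le> chord_sum g ts"
  by (induction g ts rule: chord_sum.induct) auto

lemma sum_dist_eq_chord_sum:
  "(\<Sum>i<length ts - 1. dist (g (ts ! i)) (g (ts ! Suc i))) = chord_sum g ts"
proof (induction g ts rule: chord_sum.induct)
  case (1 g s t ts)
  have "length (s # t # ts) - 1 = Suc (length (t # ts) - 1)" by simp
  then show ?case using 1 by (simp only: sum.lessThan_Suc_shift) simp
qed auto

lemma seg_length_eq_SUP: "seg_length g a b = (SUP ts\<in>partitions a b. ennreal (chord_sum g ts))"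
  unfolding seg_length_def partitions_def
  by (simp add: sum_dist_eq_chord_sum[symmetric])

lemma partitions_mem:
  assumes "ts \<in> partitions a b" "t \<in> set ts"
  shows "a \<le> t" "t \<le> b"
proof -
  have ts: "sorted ts" "ts \<noteq> []" "hd ts = a" "last ts = b"
    using assms(1) unfolding partitions_def by auto
  then obtain us where "ts = a # us" by (cases ts) auto
  then show "a \<le> t" using ts(1) assms(2) by auto
  obtain vs where "ts = vs @ [b]" using ts(2,4) by (metis append_butlast_last_id)
  then show "t \<le> b" using ts(1) assms(2) by (auto simp: sorted_append)
qed

lemma partitions_le: "ts \<in> partitions a b \<Longrightarrow> a \<le> b"
  using partitions_mem[of ts a b "hd ts"] unfolding partitions_def by auto

lemma partitions_two_points: "a \<le> b \<Longrightarrow> [a, b] \<in> partitions a b"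
  unfolding partitions_def by auto

lemma partitions_nonempty: "a \<le> b \<Longrightarrow> partitions a b \<noteq> {}"
  using partitions_two_points by blast

lemma chord_sum_const: "(\<And>t. t \<in> set ts \<Longrightarrow> g t = g a) \<Longrightarrow> chord_sum g ts = 0"
  by (induction g ts rule: chord_sum.induct) auto

lemma chord_sum_cong: "(\<And>t. t \<in> set ts \<Longrightarrow> g t = h t) \<Longrightarrow> chord_sum g ts = chord_sum h ts"
  by (induction g ts rule: chord_sum.induct) auto

lemma chord_sum_map: "chord_sum g (map f ts) = chord_sum (g \<circ> f) ts"
  by (induction ts rule: induct_list012) auto

lemma chord_sum_append: "chord_sum g (ss @ t # ts) = chord_sum g (ss @ [t]) + chord_sum g (t # ts)"
proof (induction ss)
  case (Cons s ss)
  then show ?case by (cases ss) auto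
qed simp

lemma partitions_append:
  assumes "ss \<in> partitions a b" "ts \<in> partitions b c"
  shows "ss @ tl ts \<in> partitions a c" "chord_sum g (ss @ tl ts) = chord_sum g ss + chord_sum g ts"
proof -
  have "ss \<noteq> []" "last ss = b" using assms(1) unfolding partitions_def by auto
  then obtain us where ss: "ss = us @ [b]" by (metis append_butlast_last_id)
  obtain vs where ts: "ts = b # vs"
    using assms(2) unfolding partitions_def by (cases ts) auto
  have sorted: "sorted (us @ [b])" "sorted (b # vs)" and ends: "hd (us @ [b]) = a" "last (b # vs) = c"
    using assms unfolding partitions_def ss ts by auto
  have "\<forall>x\<in>set us. \<forall>y\<in>set vs. x \<le> y"
    using sorted by (simp add: sorted_append) (meson order_trans)
  then have "sorted (us @ b # vs)"
    using sorted by (simp add: sorted_append)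
  moreover have "hd (us @ b # vs) = a"
    using ends(1) by (cases us) auto
  moreover have "last (us @ b # vs) = c"
    using ends(2) by (simp add: last_append)
  ultimately show "ss @ tl ts \<in> partitions a c" unfolding partitions_def ss ts by simp
  show "chord_sum g (ss @ tl ts) = chord_sum g ss + chord_sum g ts"
    unfolding ss ts using chord_sum_append[of g us b vs] by simp
qed

lemma chord_sum_le_across_gap:
  assumes "ts \<in> partitions a c" "a \<le> s" "s \<le> s'" "s' \<le> c" "\<forall>t\<in>set ts. t \<notin> {s<..<s'}"
  shows "\<exists>ps\<in>partitions a s. \<exists>qs\<in>partitions s' c.
           chord_sum g ts \<le> chord_sum g ps + dist (g s) (g s') + chord_sum g qs"
  using assms
proof (induction ts arbitrary: a rule: induct_list012)
  case 1
  then show ?case unfolding partitions_def by simp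
next
  case (2 t)
  then have "[a] \<in> partitions a s" "[c] \<in> partitions s' c"
    unfolding partitions_def by auto
  moreover have "chord_sum g [t] \<le> chord_sum g [a] + dist (g s) (g s') + chord_sum g [c]" by simp
  ultimately show ?case by blast
next
  case (3 t p rest)
  have "t = a" "a \<le> p" and rest: "p # rest \<in> partitions p c"
    using "3.prems"(1) unfolding partitions_def by auto
  then have split: "chord_sum g (t # p # rest) = dist (g a) (g p) + chord_sum g (p # rest)" by simp
  show ?case
  proof (cases "p \<le> s")
    case True
    then obtain ps qs where ps: "ps \<in> partitions p s" and qs: "qs \<in> partitions s' c"
      and le: "chord_sum g (p # rest) \<le> chord_sum g ps + dist (g s) (g s') + chord_sum g qs"
      using "3.IH"(2)[OF rest] "3.prems" by auto
    then obtain us where "ps = p # us" unfolding partitions_def by (cases ps) auto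
    then have aps: "a # ps \<in> partitions a s" "chord_sum g (a # ps) = dist (g a) (g p) + chord_sum g ps"
      using ps \<open>a \<le> p\<close> unfolding partitions_def by auto
    then have "chord_sum g (t # p # rest) \<le> chord_sum g (a # ps) + dist (g s) (g s') + chord_sum g qs"
      using le split by linarith
    then show ?thesis using aps(1) qs by blast
  next
    case False
    then have "s' \<le> p" using "3.prems"(5) by auto
    then have "s' # p # rest \<in> partitions s' c" "[a, s] \<in> partitions a s"
      using rest "3.prems"(2) unfolding partitions_def by auto
    moreover have "dist (g a) (g p) \<le> dist (g a) (g s) + dist (g s) (g s') + dist (g s') (g p)"
      using dist_triangle[of "g a" "g p" "g s"] dist_triangle[of "g s" "g p" "g s'"] by linarith
    then have "chord_sum g (t # p # rest)
        \<le> chord_sum g [a, s] + dist (g s) (g s') + chord_sum g (s' # p # rest)"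
      using split by simp
    ultimately show ?thesis by blast
  qed
qed

lemma seg_length_ge_chord_sum: "ts \<in> partitions a b \<Longrightarrow> ennreal (chord_sum g ts) \<le> seg_length g a b"
  unfolding seg_length_eq_SUP by (rule SUP_upper)

lemma seg_length_ge_dist: "a \<le> b \<Longrightarrow> ennreal (dist (g a) (g b)) \<le> seg_length g a b"
  using seg_length_ge_chord_sum[OF partitions_two_points, of a b g] by simp

lemma seg_length_empty:
  assumes "b < a"
  shows "seg_length g a b = 0"
proof -
  have "partitions a b = {}" using partitions_le[of _ a b] assms by fastforce
  then show ?thesis unfolding seg_length_eq_SUP by (simp add: bot_ennreal)
qed

lemma seg_length_refl: "seg_length g a a = 0"
proof -
  have "chord_sum g ts = 0" if "ts \<in> partitions a a" for ts
    using chord_sum_const[of ts g a] partitions_mem[OF that] by force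
  then show ?thesis unfolding seg_length_eq_SUP by (simp add: partitions_nonempty)
qed

lemma seg_length_cong:
  "(\<And>t. a \<le> t \<Longrightarrow> t \<le> b \<Longrightarrow> g t = h t) \<Longrightarrow> seg_length g a b = seg_length h a b"
  unfolding seg_length_eq_SUP using partitions_mem
  by (intro SUP_cong refl arg_cong[where f = ennreal] chord_sum_cong) blast

lemma seg_length_superadd:
  assumes "a \<le> b" "b \<le> c"
  shows "seg_length g a b + seg_length g b c \<le> seg_length g a c"
proof -
  have "seg_length g a b + seg_length g b c
      = (SUP ss\<in>partitions a b. SUP ts\<in>partitions b c. ennreal (chord_sum g ss) + ennreal (chord_sum g ts))"
    unfolding seg_length_eq_SUP
    by (simp add: ennreal_SUP_add_left[symmetric] ennreal_SUP_add_right[symmetric]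
        partitions_nonempty assms)
  also have "\<dots> \<le> seg_length g a c"
  proof (intro SUP_least)
    fix ss ts assume "ss \<in> partitions a b" "ts \<in> partitions b c"
    then show "ennreal (chord_sum g ss) + ennreal (chord_sum g ts) \<le> seg_length g a c"
      using seg_length_ge_chord_sum[OF partitions_append(1)] partitions_append(2)
      by (metis chord_sum_nonneg ennreal_plus)
  qed
  finally show ?thesis .
qed

lemma seg_length_subadd:
  assumes "a \<le> b" "b \<le> c"
  shows "seg_length g a c \<le> seg_length g a b + seg_length g b c"
  unfolding seg_length_eq_SUP[of g a c]
proof (rule SUP_least)
  fix ts assume "ts \<in> partitions a c"
  then obtain ps qs where "ps \<in> partitions a b" "qs \<in> partitions b c"
    and "chord_sum g ts \<le> chord_sum g ps + chord_sum g qs"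
    using chord_sum_le_across_gap[of ts a c b b g] assms by auto
  then have "ennreal (chord_sum g ts) \<le> ennreal (chord_sum g ps) + ennreal (chord_sum g qs)"
    by (simp add: chord_sum_nonneg ennreal_plus[symmetric] del: ennreal_plus)
  also have "\<dots> \<le> seg_length g a b + seg_length g b c"
    by (intro add_mono seg_length_ge_chord_sum) fact+
  finally show "ennreal (chord_sum g ts) \<le> seg_length g a b + seg_length g b c" .
qed

lemma seg_length_add:
  "a \<le> b \<Longrightarrow> b \<le> c \<Longrightarrow> seg_length g a c = seg_length g a b + seg_length g b c"
  by (rule antisym[OF seg_length_subadd seg_length_superadd])

lemma seg_length_mono:
  assumes "a' \<le> a" "b \<le> b'"
  shows "seg_length g a b \<le> seg_length g a' b'"
proof (cases "a \<le> b")
  case True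
  then have "seg_length g a' b' = seg_length g a' a + seg_length g a b + seg_length g b b'"
    using seg_length_add[of a' a b' g] seg_length_add[of a b b' g] assms by (simp add: add.assoc)
  then show ?thesis by (metis add.commute le_iff_add add.assoc)
qed (simp add: seg_length_empty)

lemma partitions_affine_image:
  assumes "m > 0" "ts \<in> partitions a b"
  shows "map (\<lambda>t. m * t + k) ts \<in> partitions (m * a + k) (m * b + k)"
proof -
  have "sorted (map (\<lambda>t. m * t + k) ts)"
    using assms unfolding partitions_def by (intro sorted_map_mono) (auto simp: mono_on_def)
  then show ?thesis using assms unfolding partitions_def by (simp add: hd_map last_map)
qed

lemma partitions_affine:
  assumes "m > 0"
  shows "partitions (m * a + k) (m * b + k) = map (\<lambda>t. m * t + k) ` partitions a b"
proof (intro antisym subsetI)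
  fix ts assume ts: "ts \<in> partitions (m * a + k) (m * b + k)"
  let ?inv = "\<lambda>t. t / m - k / m"
  have "map ?inv ts \<in> partitions a b"
    using partitions_affine_image[of "1 / m" ts "m * a + k" "m * b + k" "- k / m"] assms ts
    by (simp add: field_simps)
  moreover have "ts = map (\<lambda>t. m * t + k) (map ?inv ts)"
    using assms by (simp add: map_idI field_simps)
  ultimately show "ts \<in> map (\<lambda>t. m * t + k) ` partitions a b" by blast
qed (use partitions_affine_image[OF assms] in blast)

lemma seg_length_const: "seg_length (\<lambda>_. p) a b = 0"
  unfolding seg_length_eq_SUP using chord_sum_const[of _ "\<lambda>_. p" 0]
  by (simp add: SUP_constant bot_ennreal)

lemma seg_length_affine:
  assumes "m \<ge> 0"
  shows "seg_length (\<lambda>t. g (m * t + k)) a b = seg_length g (m * a + k) (m * b + k)"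
proof (cases "m = 0 \<or> b < a")
  case True
  show ?thesis
  proof (cases "m = 0")
    case False
    then have "b < a" "m * b + k < m * a + k" using True assms by auto
    then show ?thesis by (simp add: seg_length_empty)
  qed (simp add: seg_length_const seg_length_refl)
next
  case False
  then have "m > 0" using assms by simp
  then show ?thesis
    unfolding seg_length_eq_SUP partitions_affine[OF \<open>m > 0\<close>] image_image chord_sum_map
    by (simp add: o_def)
qed

lemma seg_length_subpath:
  "u \<le> v \<Longrightarrow> seg_length (subpath u v g) a b = seg_length g (u + (v - u) * a) (u + (v - u) * b)"
  unfolding subpath_def using seg_length_affine[of "v - u" g u a b] by (simp add: add.commute)

lemma seg_length_joinpaths_left:
  assumes "b \<le> 1/2"
  shows "seg_length (g1 +++ g2) a b = seg_length g1 (2 * a) (2 * b)"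
proof -
  have "seg_length (g1 +++ g2) a b = seg_length (\<lambda>t. g1 (2 * t + 0)) a b"
    by (rule seg_length_cong) (use assms in \<open>simp add: joinpaths_def\<close>)
  then show ?thesis using seg_length_affine[of 2 g1 0 a b] by simp
qed

lemma seg_length_joinpaths_right:
  assumes "1/2 \<le> a" "g1 1 = g2 0"
  shows "seg_length (g1 +++ g2) a b = seg_length g2 (2 * a - 1) (2 * b - 1)"
proof -
  have "seg_length (g1 +++ g2) a b = seg_length (\<lambda>t. g2 (2 * t + (- 1))) a b"
  proof (rule seg_length_cong)
    fix t assume "a \<le> t"
    show "(g1 +++ g2) t = g2 (2 * t + - 1)"
    proof (cases "t = 1/2")
      case False
      then show ?thesis using assms \<open>a \<le> t\<close> by (simp add: joinpaths_def)
    next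
      case True
      show ?thesis unfolding True joinpaths_def using assms(2) by simp
    qed
  qed
  then show ?thesis using seg_length_affine[of 2 g2 "- 1" a b] by simp
qed

lemma seg_length_joinpaths:
  "g1 1 = g2 0 \<Longrightarrow> seg_length (g1 +++ g2) 0 1 = seg_length g1 0 1 + seg_length g2 0 1"
  using seg_length_add[of 0 "1/2" 1 "g1 +++ g2"] seg_length_joinpaths_left[of "1/2" g1 g2 0]
    seg_length_joinpaths_right[of "1/2" g1 g2 1]
  by simp

lemma dist_linepath: "dist (linepath x y s) (linepath x y t) = \<bar>s - t\<bar> * dist x y"
proof -
  have "linepath x y s - linepath x y t = (s - t) *\<^sub>R (y - x)"
    unfolding linepath_def by (simp add: algebra_simps)
  then show ?thesis by (simp add: dist_norm norm_minus_commute)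
qed

lemma chord_sum_linepath:
  "sorted ts \<Longrightarrow> ts \<noteq> [] \<Longrightarrow> chord_sum (linepath x y) ts = (last ts - hd ts) * dist x y"
  by (induction ts rule: induct_list012) (auto simp: dist_linepath algebra_simps)

lemma seg_length_linepath:
  assumes "a \<le> b"
  shows "seg_length (linepath x y) a b = ennreal ((b - a) * dist x y)"
proof -
  have "(SUP ts\<in>partitions a b. ennreal (chord_sum (linepath x y) ts))
      = (SUP ts\<in>partitions a b. ennreal ((b - a) * dist x y))"
    by (rule SUP_cong) (auto simp: partitions_def chord_sum_linepath)
  then show ?thesis unfolding seg_length_eq_SUP using partitions_nonempty[OF assms] by simp
qed

section \<open>Arc length of a rectifiable path\<close>

locale rectifiable =
  fixes g :: "real \<Rightarrow> 'a::real_normed_vector"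
  assumes is_path: "path g" and finite_length: "seg_length g 0 1 < \<infinity>"
begin

definition len :: "real \<Rightarrow> real \<Rightarrow> real" where
  "len a b = enn2real (seg_length g a b)"

lemma seg_length_eq_len: "0 \<le> a \<Longrightarrow> b \<le> 1 \<Longrightarrow> seg_length g a b = ennreal (len a b)"
  unfolding len_def using seg_length_mono[of 0 a b 1 g] finite_length
  by (simp add: ennreal_enn2real_if top.not_eq_extremum)

lemma len_nonneg: "0 \<le> len a b"
  unfolding len_def by simp

lemma len_refl: "len a a = 0"
  unfolding len_def by (simp add: seg_length_refl)

lemma len_add: "0 \<le> a \<Longrightarrow> a \<le> b \<Longrightarrow> b \<le> c \<Longrightarrow> c \<le> 1 \<Longrightarrow> len a c = len a b + len b c"
  using seg_length_add[of a b c g] seg_length_eq_len[of a b] seg_length_eq_len[of b c]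
    seg_length_eq_len[of a c] len_nonneg[of a b] len_nonneg[of b c] len_nonneg[of a c]
  by (simp add: ennreal_plus[symmetric] del: ennreal_plus)

lemma len_mono: "0 \<le> a' \<Longrightarrow> a' \<le> a \<Longrightarrow> a \<le> b \<Longrightarrow> b \<le> b' \<Longrightarrow> b' \<le> 1 \<Longrightarrow> len a b \<le> len a' b'"
  using len_add[of a' a b'] len_add[of a b b'] len_nonneg[of a' a] len_nonneg[of b b'] by simp

lemma dist_le_len: "0 \<le> a \<Longrightarrow> a \<le> b \<Longrightarrow> b \<le> 1 \<Longrightarrow> dist (g a) (g b) \<le> len a b"
  using seg_length_ge_dist[of a b g] seg_length_eq_len[of a b] len_nonneg[of a b] by simp

lemma chord_sum_le_len: "0 \<le> a \<Longrightarrow> b \<le> 1 \<Longrightarrow> ts \<in> partitions a b \<Longrightarrow> chord_sum g ts \<le> len a b"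
  using seg_length_ge_chord_sum[of ts a b g] seg_length_eq_len[of a b] len_nonneg[of a b] by simp

lemma len_approx:
  assumes "0 \<le> a" "b \<le> 1" "a \<le> b" "\<epsilon> > 0"
  shows "\<exists>ts\<in>partitions a b. len a b - \<epsilon> < chord_sum g ts"
proof (cases "len a b < \<epsilon>")
  case True
  moreover have "chord_sum g [a, b] = dist (g a) (g b)" by simp
  ultimately have "len a b - \<epsilon> < chord_sum g [a, b]" using zero_le_dist[of "g a" "g b"] by linarith
  then show ?thesis using partitions_two_points[OF assms(3)] by blast
next
  case False
  then have "ennreal (len a b - \<epsilon>) < (SUP ts\<in>partitions a b. ennreal (chord_sum g ts))"
    using assms seg_length_eq_len[of a b] by (simp add: seg_length_eq_SUP[symmetric] ennreal_less_iff)
  then obtain ts where "ts \<in> partitions a b" "ennreal (len a b - \<epsilon>) < ennreal (chord_sum g ts)"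
    unfolding less_SUP_iff by blast
  then show ?thesis using False by (intro bexI) (auto simp: ennreal_less_iff)
qed

text \<open>Take partitions of \<open>[0, t]\<close> and \<open>[t, 1]\<close> that almost realize the length, and a window
  around \<open>t\<close> containing none of their points: inside it, the only contribution to the length
  comes from the chords at \<open>t\<close>, which are small by continuity of \<open>g\<close>.\<close>
lemma len_small_near:
  assumes "0 \<le> t" "t \<le> 1" "\<epsilon> > 0"
  shows "\<exists>h>0. \<forall>s s'. 0 \<le> s \<longrightarrow> s \<le> t \<longrightarrow> t \<le> s' \<longrightarrow> s' \<le> 1 \<longrightarrow> s' - s < h \<longrightarrow> len s s' < \<epsilon>"
proof -
  obtain ps where ps: "ps \<in> partitions 0 t" "len 0 t - \<epsilon>/4 < chord_sum g ps"
    using len_approx[of 0 t "\<epsilon>/4"] assms by auto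
  obtain qs where qs: "qs \<in> partitions t 1" "len t 1 - \<epsilon>/4 < chord_sum g qs"
    using len_approx[of t 1 "\<epsilon>/4"] assms by auto
  obtain \<delta> where \<delta>: "\<delta> > 0" "\<And>s. s \<in> {0..1} \<Longrightarrow> dist s t < \<delta> \<Longrightarrow> dist (g s) (g t) < \<epsilon>/4"
    using is_path assms unfolding path_def continuous_on_iff
    by (metis atLeastAtMost_iff divide_pos_pos zero_less_numeral)
  obtain \<eta> where \<eta>: "\<eta> > 0" "\<forall>x\<in>set ps \<union> set qs. x \<noteq> t \<longrightarrow> \<eta> \<le> dist t x"
    using finite_set_avoid[of "set ps \<union> set qs" t] by auto
  show ?thesis
  proof (intro exI[of _ "min \<delta> \<eta>"] conjI allI impI)
    fix s s' assume s: "0 \<le> s" "s \<le> t" "t \<le> s'" "s' \<le> 1" "s' - s < min \<delta> \<eta>"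
    have "\<forall>x\<in>set ps. x \<notin> {s<..<t}" "\<forall>x\<in>set qs. x \<notin> {t<..<s'}"
      using \<eta>(2) s by (fastforce simp: dist_real_def)+
    then obtain ps1 ps2 qs1 qs2 where
      "ps1 \<in> partitions 0 s" "ps2 \<in> partitions t t" "qs1 \<in> partitions t t" "qs2 \<in> partitions s' 1"
      and ps_le: "chord_sum g ps \<le> chord_sum g ps1 + dist (g s) (g t) + chord_sum g ps2"
      and qs_le: "chord_sum g qs \<le> chord_sum g qs1 + dist (g t) (g s') + chord_sum g qs2"
      using chord_sum_le_across_gap[OF ps(1), of s t g] chord_sum_le_across_gap[OF qs(1), of t s' g] s
      by auto
    then have "chord_sum g ps \<le> len 0 s + dist (g s) (g t)" "chord_sum g qs \<le> dist (g t) (g s') + len s' 1"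
      using ps_le qs_le chord_sum_le_len[of t t] chord_sum_le_len[of 0 s ps1] chord_sum_le_len[of s' 1 qs2]
        s assms len_refl chord_sum_nonneg[of g ps2] chord_sum_nonneg[of g qs1]
      by fastforce+
    moreover have "dist (g s) (g t) < \<epsilon>/4" "dist (g t) (g s') < \<epsilon>/4"
      using \<delta>(2)[of s] \<delta>(2)[of s'] s assms by (auto simp: dist_real_def dist_commute)
    moreover have "len 0 t + len t 1 = len 0 s + len s s' + len s' 1"
      using len_add[of 0 s t] len_add[of s t s'] len_add[of t s' 1] len_add[of 0 t 1] len_add[of 0 s 1]
        len_add[of s s' 1] s assms by linarith
    ultimately show "len s s' < \<epsilon>" using ps(2) qs(2) by linarith
  qed (use \<delta> \<eta> in simp)
qed

lemma continuous_on_len: "continuous_on {0..1} (len 0)"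
  unfolding continuous_on_iff
proof (intro ballI allI impI)
  fix t e :: real assume t: "t \<in> {0..1}" and e: "e > 0"
  then obtain h where h: "h > 0"
    "\<And>s s'. 0 \<le> s \<Longrightarrow> s \<le> t \<Longrightarrow> t \<le> s' \<Longrightarrow> s' \<le> 1 \<Longrightarrow> s' - s < h \<Longrightarrow> len s s' < e"
    using len_small_near[of t e] by auto
  show "\<exists>d>0. \<forall>t'\<in>{0..1}. dist t' t < d \<longrightarrow> dist (len 0 t') (len 0 t) < e"
  proof (intro exI[of _ h] conjI ballI impI)
    fix t' assume t': "t' \<in> {0..1}" "dist t' t < h"
    show "dist (len 0 t') (len 0 t) < e"
    proof (cases "t \<le> t'")
      case True
      then show ?thesis
        using h(2)[of t t'] len_add[of 0 t t'] len_nonneg[of t t'] t t' by (auto simp: dist_real_def)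
    next
      case False
      then show ?thesis
        using h(2)[of t' t] len_add[of 0 t' t] len_nonneg[of t' t] t t' by (auto simp: dist_real_def)
    qed
  qed (use h in simp)
qed

lemma arclen_fun_eq_len: "arclen_fun g t = len 0 (max 0 (min 1 t))"
  unfolding arclen_fun_def len_def ..

lemma continuous_arclen_fun: "continuous_on UNIV (arclen_fun g)"
proof -
  have "continuous_on UNIV (len 0 \<circ> (\<lambda>t::real. max 0 (min 1 t)))"
    by (intro continuous_on_compose continuous_intros continuous_on_subset[OF continuous_on_len]) auto
  then show ?thesis unfolding arclen_fun_eq_len o_def .
qed

lemma mono_arclen_fun: "mono (arclen_fun g)"
  unfolding arclen_fun_eq_len by (intro monoI len_mono) auto

lemma exists_len_eq:
  assumes "0 \<le> a" "a \<le> b" "b \<le> 1" "0 \<le> r" "r \<le> len a b"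
  obtains t where "a \<le> t" "t \<le> b" "len a t = r"
proof -
  have "continuous_on {a..b} (len 0)"
    using continuous_on_subset[OF continuous_on_len] assms by auto
  then obtain t where "a \<le> t" "t \<le> b" "len 0 t = len 0 a + r"
    using IVT'[of "len 0" a "len 0 a + r" b] assms len_add[of 0 a b] by auto
  then show ?thesis using that len_add[of 0 a t] assms by simp
qed

end

lemma rectifiable_if_rectifiable_path: "rectifiable_path g \<Longrightarrow> rectifiable g"
  unfolding rectifiable_path_def path_len_def by unfold_locales auto

section \<open>Distance to the boundary and quasihyperbolic length\<close>

lemma bdist_nonneg: "0 \<le> bdist G x"
  unfolding bdist_def by (rule infdist_nonneg)

lemma bdist_le_bdist_add_dist: "bdist G x \<le> bdist G y + dist x y"
  unfolding bdist_def by (rule infdist_triangle)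

lemma bdist_pos_open:
  assumes "open G" "G \<noteq> {}" "G \<noteq> UNIV" "z \<in> G"
  shows "0 < bdist G z"
proof -
  have "frontier G \<noteq> {}" using assms frontier_eq_empty by blast
  moreover have "z \<notin> frontier G" using assms by (simp add: frontier_def interior_open)
  ultimately show ?thesis unfolding bdist_def by (intro infdist_pos_not_in_closed) auto
qed

lemma mem_if_dist_lt_bdist:
  assumes "x \<in> G" "dist x y < bdist G x"
  shows "y \<in> G"
proof (rule ccontr)
  assume "y \<notin> G"
  then obtain z where z: "z \<in> closed_segment x y" "z \<in> frontier G"
    using connected_Int_frontier[of "closed_segment x y" G] assms(1) by auto
  then have "bdist G x \<le> dist x z" unfolding bdist_def by (intro infdist_le)
  moreover have "dist x z \<le> dist x y" using dist_in_closed_segment[OF z(1)] by (simp add: dist_commute)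
  ultimately show False using assms(2) by simp
qed

locale qh_path = rectifiable g for g :: "real \<Rightarrow> 'a::euclidean_space" +
  fixes G :: "'a set"
  assumes path_image_subset: "path_image g \<subseteq> G" and bdist_pos: "\<And>z. z \<in> G \<Longrightarrow> 0 < bdist G z"
begin

abbreviation \<mu> :: "real measure" where
  "\<mu> \<equiv> interval_measure (arclen_fun g)"

definition qh_int :: "real \<Rightarrow> real \<Rightarrow> ennreal" where
  "qh_int a b = (\<integral>\<^sup>+ t \<in> {a<..b}. ennreal (1 / bdist G (g t)) \<partial>\<mu>)"

lemma bdist_path_pos: "0 \<le> t \<Longrightarrow> t \<le> 1 \<Longrightarrow> 0 < bdist G (g t)"
  using path_image_subset unfolding path_image_def by (intro bdist_pos) auto

lemma emeasure_Ioc: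
  assumes "0 \<le> a" "a \<le> b" "b \<le> 1"
  shows "emeasure \<mu> {a<..b} = ennreal (len a b)"
proof -
  have "\<And>x. continuous (at_right x) (arclen_fun g)"
    using continuous_arclen_fun
    by (simp add: continuous_on_eq_continuous_at continuous_at_imp_continuous_at_within)
  then have "emeasure \<mu> {a<..b} = ennreal (arclen_fun g b - arclen_fun g a)"
    using mono_arclen_fun assms(2) by (intro emeasure_interval_measure_Ioc) (auto simp: mono_def)
  then show ?thesis using assms len_add[of 0 a b] by (simp add: arclen_fun_eq_len)
qed

lemma qh_integrand_measurable:
  assumes "0 \<le> a" "b \<le> 1"
  shows "(\<lambda>t. ennreal (1 / bdist G (g t)) * indicator {a<..b} t) \<in> borel_measurable \<mu>"
proof -
  have "continuous_on {a<..b} g"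
    by (rule continuous_on_subset[OF is_path[unfolded path_def]]) (use assms in auto)
  then have "continuous_on {a<..b} (\<lambda>t. 1 / infdist (g t) (frontier G))"
  proof (intro continuous_intros ballI)
    fix t assume "t \<in> {a<..b}"
    then show "infdist (g t) (frontier G) \<noteq> 0"
      using bdist_path_pos[of t] assms unfolding bdist_def by auto
  qed
  then have "continuous_on {a<..b} (\<lambda>t. 1 / bdist G (g t))"
    unfolding bdist_def .
  then have "(\<lambda>t. indicator {a<..b} t *\<^sub>R (1 / bdist G (g t))) \<in> borel_measurable borel"
    by (intro borel_measurable_continuous_on_indicator) auto
  then have "(\<lambda>t. ennreal (indicator {a<..b} t *\<^sub>R (1 / bdist G (g t)))) \<in> borel_measurable \<mu>"
    by (simp add: measurable_cong_sets[of \<mu> borel])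
  moreover have "ennreal (indicator {a<..b} t *\<^sub>R (1 / bdist G (g t)))
      = ennreal (1 / bdist G (g t)) * indicator {a<..b} t" for t
    by (simp add: indicator_def)
  ultimately show ?thesis by simp
qed

lemma qh_int_add:
  assumes "0 \<le> a" "a \<le> b" "b \<le> c" "c \<le> 1"
  shows "qh_int a c = qh_int a b + qh_int b c"
proof -
  have "qh_int a c = (\<integral>\<^sup>+ t. ennreal (1 / bdist G (g t)) * indicator {a<..b} t
      + ennreal (1 / bdist G (g t)) * indicator {b<..c} t \<partial>\<mu>)"
    unfolding qh_int_def using assms by (intro nn_integral_cong) (auto simp: indicator_def)
  also have "\<dots> = qh_int a b + qh_int b c"
    unfolding qh_int_def using assms by (intro nn_integral_add qh_integrand_measurable) auto
  finally show ?thesis .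
qed

lemma qh_int_le_qh_length: "0 \<le> a \<Longrightarrow> b \<le> 1 \<Longrightarrow> qh_int a b \<le> qh_length G g"
  unfolding qh_int_def qh_length_def by (intro nn_integral_mono) (auto simp: indicator_def)

lemma len_div_le_qh_int:
  assumes "0 \<le> a" "a \<le> b" "b \<le> 1" "M > 0" "\<And>t. a \<le> t \<Longrightarrow> t \<le> b \<Longrightarrow> bdist G (g t) \<le> M"
  shows "ennreal (len a b / M) \<le> qh_int a b"
proof -
  have "ennreal (len a b / M) = (\<integral>\<^sup>+ t \<in> {a<..b}. ennreal (1 / M) \<partial>\<mu>)"
    using emeasure_Ioc[of a b] assms len_nonneg[of a b]
    by (simp add: nn_integral_cmult_indicator ennreal_mult[symmetric] del: ennreal_mult)
  also have "\<dots> \<le> qh_int a b"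
    unfolding qh_int_def
  proof (intro nn_integral_mono)
    fix t
    show "ennreal (1 / M) * indicator {a<..b} t \<le> ennreal (1 / bdist G (g t)) * indicator {a<..b} t"
      using assms bdist_path_pos[of t]
      by (cases "t \<in> {a<..b}") (auto intro!: ennreal_leI frac_le)
  qed
  finally show ?thesis .
qed

lemma half_le_qh_int:
  assumes "0 \<le> a" "a \<le> s" "s \<le> t" "t \<le> 1" "0 < M"
    and "len s t = M * bdist G (g a)" "len a t \<le> (2 * M - 1) * bdist G (g a)"
  shows "ennreal (1 / 2) \<le> qh_int s t"
proof -
  define e where "e = bdist G (g a)"
  have "0 < e" unfolding e_def using bdist_path_pos assms(1-4) by simp
  have "bdist G (g \<tau>) \<le> 2 * M * e" if "s \<le> \<tau>" "\<tau> \<le> t" for \<tau>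
  proof -
    have "bdist G (g \<tau>) \<le> e + dist (g a) (g \<tau>)"
      using bdist_le_bdist_add_dist[of G "g \<tau>" "g a"] unfolding e_def by (simp add: dist_commute)
    also have "\<dots> \<le> e + len a t"
      using dist_le_len[of a \<tau>] len_mono[of a a \<tau> t] that assms(1-4) by simp
    also have "\<dots> \<le> 2 * M * e"
      using assms(7) unfolding e_def by (simp add: algebra_simps)
    finally show ?thesis .
  qed
  then have "ennreal (len s t / (2 * M * e)) \<le> qh_int s t"
    using assms(1-5) \<open>0 < e\<close> by (intro len_div_le_qh_int) auto
  then show ?thesis using assms(5,6) \<open>0 < e\<close> unfolding e_def by simp
qed

text \<open>Doubling: after a stretch of length \<open>(2^k - 1) \<delta>(g a)\<close>, the next stretch of length
  \<open>2^k \<delta>(g a)\<close> stays within distance \<open>2^(k+1) \<delta>(g a)\<close> of the boundary and so contributes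
  another \<open>1/2\<close> to the quasihyperbolic length.\<close>
lemma half_k_le_qh_int:
  assumes "0 \<le> a" "a \<le> b" "b \<le> 1" "(2 ^ k - 1) * bdist G (g a) \<le> len a b"
  shows "ennreal (k / 2) \<le> qh_int a b"
  using assms(2-4)
proof (induction k arbitrary: b)
  case (Suc k)
  define e where "e = bdist G (g a)"
  have "0 \<le> e" unfolding e_def by (rule bdist_nonneg)
  have "(2 ^ k - 1) * e + 2 ^ k * e \<le> len a b"
    using Suc.prems unfolding e_def by (simp add: algebra_simps)
  moreover have "0 \<le> (2::real) ^ k * e" using \<open>0 \<le> e\<close> by simp
  ultimately have le: "(2 ^ k - 1) * e \<le> len a b" "2 ^ k * e \<le> len a b - (2 ^ k - 1) * e"
    by linarith+
  obtain t' where t': "a \<le> t'" "t' \<le> b" "len a t' = (2 ^ k - 1) * e"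
    using exists_len_eq[of a b "(2 ^ k - 1) * e"] assms(1) Suc.prems le \<open>0 \<le> e\<close> by auto
  have "2 ^ k * e \<le> len t' b" using le t' len_add[of a t' b] assms(1) Suc.prems by simp
  then obtain t'' where t'': "t' \<le> t''" "t'' \<le> b" "len t' t'' = 2 ^ k * e"
    using exists_len_eq[of t' b "2 ^ k * e"] assms(1) Suc.prems t' \<open>0 \<le> e\<close> by auto
  have "len a t'' = (2 * 2 ^ k - 1) * e"
    using len_add[of a t' t''] t' t'' assms(1) Suc.prems by (simp add: algebra_simps)
  then have half: "ennreal (1 / 2) \<le> qh_int t' t''"
    using t' t'' assms(1) Suc.prems unfolding e_def by (intro half_le_qh_int) auto
  have "ennreal (Suc k / 2) = ennreal (k / 2 + 1 / 2)"
    by (simp add: add_divide_distrib)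
  also have "\<dots> = ennreal (k / 2) + ennreal (1 / 2)"
    by (rule ennreal_plus) auto
  also have "\<dots> \<le> qh_int a t' + qh_int t' t''"
    using Suc.IH[of t'] t' half assms(1) Suc.prems unfolding e_def by (intro add_mono) auto
  also have "\<dots> \<le> qh_int a b"
    using qh_int_add[of a t' t''] qh_int_add[of a t'' b] t' t'' assms(1) Suc.prems
    by (simp add: le_iff_add)
  finally show ?case .
qed simp

lemma len_lt_if_qh_length_lt:
  assumes "qh_length G g < ennreal (k / 2)" "0 \<le> a" "a \<le> b" "b \<le> 1"
  shows "len a b < (2 ^ k - 1) * bdist G (g a)"
  using half_k_le_qh_int[of a b k] qh_int_le_qh_length[of a b] assms
  by (meson leI order.trans not_le)

end

lemma exists_path_if_qh_metric_lt:
  assumes "\<And>z. z \<in> G \<Longrightarrow> 0 < bdist G z" "qh_metric G p q < ennreal (k / 2)"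
  obtains g where "rectifiable_path g" "path_image g \<subseteq> G" "pathstart g = p" "pathfinish g = q"
    "path_len g \<le> ennreal (2 ^ k * bdist G p)" "\<And>u. u \<in> {0..1} \<Longrightarrow> bdist G q \<le> 2 ^ k * bdist G (g u)"
proof -
  obtain g where g: "rectifiable_path g" "path_image g \<subseteq> G" "pathstart g = p" "pathfinish g = q"
    and qh: "qh_length G g < ennreal (k / 2)"
    using assms(2) unfolding qh_metric_def INF_less_iff by blast
  interpret qh_path g G
    using g(1,2) assms(1) unfolding rectifiable_path_def path_len_def by unfold_locales auto
  have ends: "g 0 = p" "g 1 = q" using g(3,4) unfolding pathstart_def pathfinish_def by auto
  have "len 0 1 \<le> 2 ^ k * bdist G p"
    using len_lt_if_qh_length_lt[OF qh, of 0 1] bdist_nonneg[of G p] ends by (simp add: algebra_simps)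
  then have "path_len g \<le> ennreal (2 ^ k * bdist G p)"
    unfolding path_len_def using seg_length_eq_len[of 0 1] by (simp add: ennreal_leI)
  moreover have "bdist G q \<le> 2 ^ k * bdist G (g u)" if "u \<in> {0..1}" for u
  proof -
    have "bdist G q \<le> bdist G (g u) + len u 1"
      using bdist_le_bdist_add_dist[of G "g 1" "g u"] dist_le_len[of u 1] that ends
      by (simp add: dist_commute)
    also have "\<dots> \<le> 2 ^ k * bdist G (g u)"
      using len_lt_if_qh_length_lt[OF qh, of u 1] that by (simp add: algebra_simps)
    finally show ?thesis .
  qed
  ultimately show ?thesis using that g by blast
qed

section \<open>Cone paths\<close>

lemma ennreal_inverse_mult_le_iff:
  assumes "0 < C" "0 \<le> b"
  shows "ennreal (1 / C) * m \<le> ennreal b \<longleftrightarrow> m \<le> ennreal (C * b)"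
proof
  have inv: "ennreal C * ennreal (1 / C) = 1"
    using assms by (simp add: ennreal_mult[symmetric] del: ennreal_mult)
  assume "ennreal (1 / C) * m \<le> ennreal b"
  then have "ennreal C * (ennreal (1 / C) * m) \<le> ennreal C * ennreal b" by (rule mult_left_mono) simp
  then show "m \<le> ennreal (C * b)" using assms by (simp add: inv mult.assoc[symmetric] ennreal_mult)
next
  assume "m \<le> ennreal (C * b)"
  then have "ennreal (1 / C) * m \<le> ennreal (1 / C) * ennreal (C * b)" by (rule mult_left_mono) simp
  then show "ennreal (1 / C) * m \<le> ennreal b"
    using assms by (simp add: ennreal_mult[symmetric] del: ennreal_mult)
qed

definition cone_path :: "'a::euclidean_space set \<Rightarrow> real \<Rightarrow> 'a \<Rightarrow> 'a \<Rightarrow> (real \<Rightarrow> 'a) \<Rightarrow> bool" where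
  "cone_path G c x y g \<longleftrightarrow> rectifiable_path g \<and> path_image g \<subseteq> G \<and> pathstart g = x \<and> pathfinish g = y \<and>
     (\<forall>t\<in>{0..1}. min (seg_length g 0 t) (seg_length g t 1) \<le> ennreal (c * bdist G (g t)))"

lemma twisted_cone_iff: "twisted_cone G \<longleftrightarrow> (\<exists>c>0. \<forall>x\<in>G. \<forall>y\<in>G. \<exists>g. cone_path G c x y g)"
  unfolding twisted_cone_def cone_path_def ..

lemma uniform_domain_iff:
  "uniform_domain G \<longleftrightarrow>
     (\<exists>C\<ge>1. \<forall>x\<in>G. \<forall>y\<in>G. \<exists>g. cone_path G C x y g \<and> path_len g \<le> ennreal (C * dist x y))"
proof -
  have "ennreal (1 / C) * m \<le> ennreal (bdist G z) \<longleftrightarrow> m \<le> ennreal (C * bdist G z)"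
    if "1 \<le> C" for C m z
    using that by (intro ennreal_inverse_mult_le_iff) (auto simp: bdist_nonneg)
  then show ?thesis
    unfolding uniform_domain_def cone_path_def by (simp add: conj_ac cong: conj_cong)
qed

lemma cone_path_mono:
  assumes "cone_path G c x y g" "c \<le> c'"
  shows "cone_path G c' x y g"
proof -
  have "ennreal (c * bdist G (g t)) \<le> ennreal (c' * bdist G (g t))" for t
    using assms(2) bdist_nonneg[of G "g t"] by (intro ennreal_leI mult_right_mono)
  then show ?thesis using assms(1) unfolding cone_path_def by (meson order_trans)
qed

lemma cone_path_head:
  assumes "cone_path G c x y g" "0 \<le> s" "s \<le> t" "t \<le> 1" "seg_length g 0 t \<le> seg_length g t 1"
  shows "seg_length g 0 s \<le> ennreal (c * bdist G (g s))"
proof -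
  have "seg_length g 0 s \<le> seg_length g s 1"
    using seg_length_mono[of 0 0 s t g] seg_length_mono[of s t 1 1 g] assms(3,5) by simp
  then show ?thesis using assms(1-4) unfolding cone_path_def by (metis atLeastAtMost_iff min.absorb1 order_trans)
qed

lemma cone_path_tail:
  assumes "cone_path G c x y g" "0 \<le> t" "t \<le> s" "s \<le> 1" "seg_length g t 1 \<le> seg_length g 0 t"
  shows "seg_length g s 1 \<le> ennreal (c * bdist G (g s))"
proof -
  have "seg_length g s 1 \<le> seg_length g 0 s"
    using seg_length_mono[of t s 1 1 g] seg_length_mono[of 0 0 t s g] assms(3,5) by simp
  then show ?thesis using assms(1-4) unfolding cone_path_def by (metis atLeastAtMost_iff min.absorb2 order_trans)
qed

lemma cone_path_linepath:
  assumes "x \<in> G" "dist x y \<le> bdist G x / 2"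
  shows "cone_path G 1 x y (linepath x y)" "path_len (linepath x y) = ennreal (dist x y)"
proof -
  have dist_x: "dist x (linepath x y t) = t * dist x y" if "0 \<le> t" for t
    using dist_linepath[of x y 0 t] that by (simp add: linepath_0')
  have image: "path_image (linepath x y) \<subseteq> G"
  proof
    fix z assume "z \<in> path_image (linepath x y)"
    then have "z \<in> closed_segment x y" by simp
    then have "dist x z \<le> dist x y" using dist_in_closed_segment[of z x y] by (simp add: dist_commute)
    show "z \<in> G"
    proof (cases "x = z")
      case False
      then have "0 < dist x z" by simp
      then show ?thesis
        using \<open>dist x z \<le> dist x y\<close> assms by (intro mem_if_dist_lt_bdist[OF assms(1)]) linarith
    qed (use assms in simp)
  qed
  have "min (seg_length (linepath x y) 0 t) (seg_length (linepath x y) t 1)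
      \<le> ennreal (bdist G (linepath x y t))" if "t \<in> {0..1}" for t
  proof -
    have "t * dist x y \<le> bdist G x - dist x (linepath x y t)"
      using dist_x[of t] that assms(2) mult_left_le_one_le[of "dist x y" t] by auto
    also have "\<dots> \<le> bdist G (linepath x y t)"
      using bdist_le_bdist_add_dist[of G x "linepath x y t"] by simp
    finally have "seg_length (linepath x y) 0 t \<le> ennreal (bdist G (linepath x y t))"
      using that seg_length_linepath[of 0 t x y] by (simp add: ennreal_leI)
    then show ?thesis by (simp add: min.coboundedI1)
  qed
  then show "cone_path G 1 x y (linepath x y)"
    using image seg_length_linepath[of 0 1 x y]
    unfolding cone_path_def rectifiable_path_def path_len_def by auto
  show "path_len (linepath x y) = ennreal (dist x y)"
    using seg_length_linepath[of 0 1 x y] unfolding path_len_def by simp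
qed

section \<open>Shortcutting a long cone path\<close>

lemma cone_path_subpath_head:
  assumes "cone_path G c x y g" "0 \<le> t" "t \<le> 1" "seg_length g 0 t \<le> seg_length g t 1"
    and "0 \<le> \<tau>" "\<tau> \<le> 1/2"
  shows "seg_length (subpath 0 t g +++ h) 0 \<tau> \<le> ennreal (c * bdist G ((subpath 0 t g +++ h) \<tau>))"
proof -
  have "(subpath 0 t g +++ h) \<tau> = g (t * (2 * \<tau>))"
    "seg_length (subpath 0 t g +++ h) 0 \<tau> = seg_length g 0 (t * (2 * \<tau>))"
    using assms(2,6) seg_length_joinpaths_left[OF assms(6), of "subpath 0 t g" h 0]
      seg_length_subpath[of 0 t g 0 "2 * \<tau>"]
    by (simp_all add: joinpaths_def subpath_def)
  then show ?thesis
    using assms by (simp add: cone_path_head[OF assms(1), of _ t] mult_left_le)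
qed

lemma cone_path_subpath_tail:
  assumes "cone_path G c x y g" "0 \<le> t" "t \<le> 1" "seg_length g t 1 \<le> seg_length g 0 t"
    and "1/2 < \<tau>" "\<tau> \<le> 1" "h 1 = g t"
  shows "seg_length (h +++ subpath t 1 g) \<tau> 1 \<le> ennreal (c * bdist G ((h +++ subpath t 1 g) \<tau>))"
proof -
  define s where "s = t + (1 - t) * (2 * \<tau> - 1)"
  have "t \<le> s" "s \<le> 1"
    using assms(3,5,6) mult_left_le[of "2 * \<tau> - 1" "1 - t"] unfolding s_def by auto
  moreover have "(h +++ subpath t 1 g) \<tau> = g s" "seg_length (h +++ subpath t 1 g) \<tau> 1 = seg_length g s 1"
    using assms(5,7) seg_length_joinpaths_right[of \<tau> h "subpath t 1 g" 1]
      seg_length_subpath[of t 1 g "2 * \<tau> - 1" 1] assms(3) unfolding s_def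
    by (simp_all add: joinpaths_def subpath_def algebra_simps)
  ultimately show ?thesis
    using cone_path_tail[OF assms(1,2) _ _ assms(4)] by simp
qed

lemma detour_path:
  fixes gm bt :: "real \<Rightarrow> 'a::real_normed_vector"
  assumes "path gm" "path bt" "0 \<le> t1" "t1 \<le> 1" "0 \<le> t2" "t2 \<le> 1" "bt 0 = gm t1" "bt 1 = gm t2"
  defines "g \<equiv> subpath 0 t1 gm +++ bt +++ subpath t2 1 gm"
  shows "path g" "g 0 = gm 0" "g 1 = gm 1" "path_image g \<subseteq> path_image gm \<union> path_image bt"
    and "seg_length g 0 1 = seg_length gm 0 t1 + seg_length bt 0 1 + seg_length gm t2 1"
proof -
  have ends: "subpath 0 t1 gm 1 = (bt +++ subpath t2 1 gm) 0" "bt 1 = subpath t2 1 gm 0"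
    using assms(7,8) by (simp_all add: subpath_def joinpaths_def)
  show "path g" unfolding g_def using assms(1-6) ends by (simp add: pathstart_def pathfinish_def)
  show "g 0 = gm 0" "g 1 = gm 1" unfolding g_def by (simp_all add: joinpaths_def subpath_def)
  have "path_image g \<subseteq> path_image (subpath 0 t1 gm) \<union> (path_image bt \<union> path_image (subpath t2 1 gm))"
    unfolding g_def by (intro order_trans[OF path_image_join_subset] Un_mono order_refl path_image_join_subset)
  then show "path_image g \<subseteq> path_image gm \<union> path_image bt"
    using path_image_subpath_subset[of 0 t1 gm] path_image_subpath_subset[of t2 1 gm] assms(3-6) by auto
  show "seg_length g 0 1 = seg_length gm 0 t1 + seg_length bt 0 1 + seg_length gm t2 1"
    unfolding g_def
    using seg_length_joinpaths[of "subpath 0 t1 gm" "bt +++ subpath t2 1 gm"]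
      seg_length_joinpaths[of bt "subpath t2 1 gm"] ends
      seg_length_subpath[of 0 t1 gm 0 1] seg_length_subpath[of t2 1 gm 0 1] assms(3-6)
    by (simp add: add.assoc)
qed

lemma detour_cone_condition:
  fixes gm bt :: "real \<Rightarrow> 'a::euclidean_space" and t1 t2 :: real
  defines "g \<equiv> subpath 0 t1 gm +++ bt +++ subpath t2 1 gm"
  assumes gm: "cone_path G c x y gm" "0 \<le> t1" "t1 \<le> 1" "0 \<le> t2" "t2 \<le> 1"
    and "seg_length gm 0 t1 \<le> seg_length gm t1 1" "seg_length gm t2 1 \<le> seg_length gm 0 t2"
    and bt: "bt 0 = gm t1" "bt 1 = gm t2"
    and mid: "\<And>u. u \<in> {0..1} \<Longrightarrow> seg_length g 0 1 \<le> ennreal (M * bdist G (bt u))"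
    and "\<tau> \<in> {0..1}"
  shows "min (seg_length g 0 \<tau>) (seg_length g \<tau> 1) \<le> ennreal (max c M * bdist G (g \<tau>))"
proof -
  have bound: "ennreal (c' * bdist G (g \<tau>)) \<le> ennreal (max c M * bdist G (g \<tau>))" if "c' \<le> max c M" for c'
    using that by (intro ennreal_leI mult_right_mono bdist_nonneg)
  consider "\<tau> \<le> 1/2" | "1/2 < \<tau>" "\<tau> \<le> 3/4" | "3/4 < \<tau>" by linarith
  then show ?thesis
  proof cases
    case 1
    have "seg_length g 0 \<tau> \<le> ennreal (c * bdist G (g \<tau>))"
      unfolding g_def using 1 assms by (intro cone_path_subpath_head) auto
    then have "seg_length g 0 \<tau> \<le> ennreal (max c M * bdist G (g \<tau>))"
      using order_trans bound[OF max.cobounded1] by blast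
    then show ?thesis by (rule min.coboundedI1)
  next
    case 2
    have "seg_length g 0 \<tau> \<le> seg_length g 0 1"
      using assms(12) by (intro seg_length_mono) auto
    also have "\<dots> \<le> ennreal (M * bdist G (bt (4 * \<tau> - 2)))"
      using 2 by (intro mid) auto
    also have "\<dots> = ennreal (M * bdist G (g \<tau>))"
      using 2 by (simp add: g_def joinpaths_def)
    also have "\<dots> \<le> ennreal (max c M * bdist G (g \<tau>))"
      by (rule bound[OF max.cobounded2])
    finally show ?thesis by (rule min.coboundedI1)
  next
    case 3
    have "subpath 0 t1 gm 1 = (bt +++ subpath t2 1 gm) 0"
      using bt by (simp add: subpath_def joinpaths_def)
    then have "seg_length g \<tau> 1 = seg_length (bt +++ subpath t2 1 gm) (2 * \<tau> - 1) (2 * 1 - 1)"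
      using 3 unfolding g_def by (intro seg_length_joinpaths_right) auto
    moreover have "g \<tau> = (bt +++ subpath t2 1 gm) (2 * \<tau> - 1)"
      using 3 unfolding g_def by (simp add: joinpaths_def)
    moreover have "seg_length (bt +++ subpath t2 1 gm) (2 * \<tau> - 1) 1
        \<le> ennreal (c * bdist G ((bt +++ subpath t2 1 gm) (2 * \<tau> - 1)))"
      using 3 assms by (intro cone_path_subpath_tail) auto
    ultimately have "seg_length g \<tau> 1 \<le> ennreal (c * bdist G (g \<tau>))" by simp
    then have "seg_length g \<tau> 1 \<le> ennreal (max c M * bdist G (g \<tau>))"
      using order_trans bound[OF max.cobounded1] by blast
    then show ?thesis by (rule min.coboundedI2)
  qed
qed

lemma cone_path_detour:
  fixes gm bt :: "real \<Rightarrow> 'a::euclidean_space"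
  assumes gm: "cone_path G c x y gm" "0 \<le> t1" "t1 \<le> 1" "0 \<le> t2" "t2 \<le> 1"
    and head: "seg_length gm 0 t1 = ennreal r" "ennreal r \<le> seg_length gm t1 1"
    and tail: "seg_length gm t2 1 = ennreal r" "ennreal r \<le> seg_length gm 0 t2"
    and bt: "rectifiable_path bt" "path_image bt \<subseteq> G" "pathstart bt = gm t1" "pathfinish bt = gm t2"
      "path_len bt \<le> ennreal (K * r)" "\<And>u. u \<in> {0..1} \<Longrightarrow> r \<le> K * bdist G (bt u)"
    and "0 \<le> r" "1 \<le> K"
  defines "g \<equiv> subpath 0 t1 gm +++ bt +++ subpath t2 1 gm"
  shows "cone_path G (max c ((2 + K) * K)) x y g" "path_len g \<le> ennreal ((2 + K) * r)"
proof -
  have rgm: "rectifiable_path gm" "path_image gm \<subseteq> G" "gm 0 = x" "gm 1 = y"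
    using gm(1) unfolding cone_path_def pathstart_def pathfinish_def by auto
  have bt_ends: "bt 0 = gm t1" "bt 1 = gm t2" using bt(3,4) unfolding pathstart_def pathfinish_def by auto
  have "path gm" "path bt" using rgm(1) bt(1) unfolding rectifiable_path_def by auto
  note g = detour_path[OF this gm(2-5) bt_ends, folded g_def]
  have "seg_length g 0 1 \<le> ennreal r + ennreal (K * r) + ennreal r"
    using g(5) head(1) tail(1) bt(5) unfolding path_len_def by (simp add: add_mono)
  also have "\<dots> = ennreal ((2 + K) * r)"
    using \<open>0 \<le> r\<close> \<open>1 \<le> K\<close> by (simp add: ennreal_plus[symmetric] algebra_simps del: ennreal_plus)
  finally have total: "seg_length g 0 1 \<le> ennreal ((2 + K) * r)" .
  have "seg_length g 0 1 \<le> ennreal ((2 + K) * K * bdist G (bt u))" if "u \<in> {0..1}" for u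
  proof -
    have "(2 + K) * r \<le> (2 + K) * (K * bdist G (bt u))"
      using bt(6)[OF that] \<open>1 \<le> K\<close> by (intro mult_left_mono) auto
    then show ?thesis using total ennreal_leI order_trans by (metis mult.assoc)
  qed
  then have "min (seg_length g 0 \<tau>) (seg_length g \<tau> 1) \<le> ennreal (max c ((2 + K) * K) * bdist G (g \<tau>))"
    if "\<tau> \<in> {0..1}" for \<tau>
    unfolding g_def using gm head tail bt_ends that
    by (intro detour_cone_condition) (auto simp: g_def)
  moreover have "seg_length g 0 1 < \<infinity>" using le_less_trans[OF total] by simp
  ultimately show "cone_path G (max c ((2 + K) * K)) x y g"
    using g rgm bt(1,2)
    unfolding cone_path_def rectifiable_path_def path_len_def pathstart_def pathfinish_def by auto
  show "path_len g \<le> ennreal ((2 + K) * r)"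
    using total unfolding path_len_def .
qed

lemma cone_path_inner_points:
  assumes "cone_path G c x y g" "0 \<le> r" "ennreal (2 * r) \<le> path_len g"
  obtains t1 t2 where "0 \<le> t1" "t1 \<le> 1" "0 \<le> t2" "t2 \<le> 1"
    "seg_length g 0 t1 = ennreal r" "ennreal r \<le> seg_length g t1 1"
    "seg_length g t2 1 = ennreal r" "ennreal r \<le> seg_length g 0 t2"
proof -
  interpret rectifiable g
    using assms(1) unfolding cone_path_def by (intro rectifiable_if_rectifiable_path) simp
  have L: "2 * r \<le> len 0 1"
    using assms(2,3) seg_length_eq_len[of 0 1] len_nonneg[of 0 1] unfolding path_len_def by simp
  obtain t1 where t1: "0 \<le> t1" "t1 \<le> 1" "len 0 t1 = r"
    using exists_len_eq[of 0 1 r] assms(2) L by auto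
  obtain t2 where t2: "0 \<le> t2" "t2 \<le> 1" "len 0 t2 = len 0 1 - r"
    using exists_len_eq[of 0 1 "len 0 1 - r"] assms(2) L by auto
  have "len t1 1 = len 0 1 - r" "len t2 1 = r"
    using len_add[OF order_refl t1(1,2) order_refl] len_add[OF order_refl t2(1,2) order_refl] t1(3) t2(3)
    by linarith+
  then have "seg_length g 0 t1 = ennreal r" "ennreal r \<le> seg_length g t1 1"
    "seg_length g t2 1 = ennreal r" "ennreal r \<le> seg_length g 0 t2"
    using t1 t2 L seg_length_eq_len by (simp_all add: ennreal_leI)
  then show ?thesis using that t1(1,2) t2(1,2) by blast
qed

lemma exists_path_if_phi_uniform:
  fixes G :: "'a::euclidean_space set"
  assumes pos: "\<And>z. z \<in> G \<Longrightarrow> 0 < bdist G z"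
    and phi: "phi_uniform \<phi> G" "strict_mono_on {0..} \<phi>" "\<phi> 0 = 0" "\<phi> (3 * c) < k / 2" "0 < c"
    and pq: "p \<in> G" "q \<in> G" "dist p q \<le> 3 * r" "r \<le> c * bdist G p" "r \<le> c * bdist G q"
  obtains g where "rectifiable_path g" "path_image g \<subseteq> G" "pathstart g = p" "pathfinish g = q"
    "path_len g \<le> ennreal (2 ^ k * bdist G p)" "\<And>u. u \<in> {0..1} \<Longrightarrow> r \<le> c * 2 ^ k * bdist G (g u)"
proof -
  have "dist p q \<le> 3 * c * min (bdist G p) (bdist G q)"
    using pq(3-5) by (simp add: min_def)
  then have "dist p q / min (bdist G p) (bdist G q) \<le> 3 * c"
    using pos[OF pq(1)] pos[OF pq(2)] by (simp add: pos_divide_le_eq)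
  then have "\<phi> (dist p q / min (bdist G p) (bdist G q)) \<le> \<phi> (3 * c)"
    using phi(5) pos[OF pq(1)] pos[OF pq(2)] by (intro strict_mono_on_leD[OF phi(2)]) auto
  then have "qh_metric G p q \<le> ennreal (\<phi> (3 * c))"
    using phi(1) pq(1,2) unfolding phi_uniform_def by (meson ennreal_leI order_trans)
  also have "\<dots> < ennreal (k / 2)"
    using strict_mono_on_leD[OF phi(2), of 0 "3 * c"] phi(3-5) by (intro ennreal_lessI) auto
  finally obtain g where g: "rectifiable_path g" "path_image g \<subseteq> G" "pathstart g = p"
    "pathfinish g = q" "path_len g \<le> ennreal (2 ^ k * bdist G p)"
    and bdist_g: "\<And>u. u \<in> {0..1} \<Longrightarrow> bdist G q \<le> 2 ^ k * bdist G (g u)"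
    using exists_path_if_qh_metric_lt[OF pos] by blast
  moreover have "r \<le> c * 2 ^ k * bdist G (g u)" if "u \<in> {0..1}" for u
  proof -
    have "c * bdist G q \<le> c * (2 ^ k * bdist G (g u))"
      using bdist_g[OF that] phi(5) by (intro mult_left_mono) auto
    then show ?thesis using pq(5) by (simp add: mult.assoc)
  qed
  ultimately show ?thesis using that by blast
qed

lemma cone_path_shortcut:
  fixes G :: "'a::euclidean_space set"
  assumes pos: "\<And>z. z \<in> G \<Longrightarrow> 0 < bdist G z"
    and phi: "phi_uniform \<phi> G" "strict_mono_on {0..} \<phi>" "\<phi> 0 = 0" "\<phi> (3 * c) < k / 2" "0 < c"
    and gm: "cone_path G c x y gm" "ennreal (2 * dist x y) \<le> path_len gm"
    and near: "bdist G x < 2 * dist x y"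
  defines "K \<equiv> (c + 3) * 2 ^ k"
  shows "\<exists>g. cone_path G (max c ((2 + K) * K)) x y g \<and> path_len g \<le> ennreal ((2 + K) * dist x y)"
proof -
  define r where "r = dist x y"
  obtain t1 t2 where t: "0 \<le> t1" "t1 \<le> 1" "0 \<le> t2" "t2 \<le> 1"
    and head: "seg_length gm 0 t1 = ennreal r" "ennreal r \<le> seg_length gm t1 1"
    and tail: "seg_length gm t2 1 = ennreal r" "ennreal r \<le> seg_length gm 0 t2"
    using cone_path_inner_points[OF gm(1) _ gm(2)] unfolding r_def by auto
  define p q where "p = gm t1" and "q = gm t2"
  have gm_ends: "gm 0 = x" "gm 1 = y" "path_image gm \<subseteq> G"
    using gm(1) unfolding cone_path_def pathstart_def pathfinish_def by auto
  then have "p \<in> G" "q \<in> G" using t unfolding p_def q_def path_image_def by auto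
  have "ennreal r \<le> ennreal (c * bdist G p)" "ennreal r \<le> ennreal (c * bdist G q)"
    using cone_path_head[OF gm(1) t(1) order_refl t(2)] cone_path_tail[OF gm(1) t(3) order_refl t(4)]
      head tail unfolding p_def q_def by auto
  then have r_le: "r \<le> c * bdist G p" "r \<le> c * bdist G q"
    using phi(5) bdist_nonneg[of G p] bdist_nonneg[of G q] by simp_all
  have "dist x p \<le> r" "dist q y \<le> r"
    using seg_length_ge_dist[OF t(1), of gm] seg_length_ge_dist[OF t(4), of gm] head(1) tail(1) gm_ends
    unfolding p_def q_def r_def by simp_all
  then have "dist p q \<le> 3 * r"
    using dist_triangle[of p q x] dist_triangle[of x q y] unfolding r_def by (simp add: dist_commute)
  then obtain bt where bt: "rectifiable_path bt" "path_image bt \<subseteq> G" "pathstart bt = p"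
    "pathfinish bt = q" "path_len bt \<le> ennreal (2 ^ k * bdist G p)"
    and bt_bdist: "\<And>u. u \<in> {0..1} \<Longrightarrow> r \<le> c * 2 ^ k * bdist G (bt u)"
    using exists_path_if_phi_uniform[OF pos phi \<open>p \<in> G\<close> \<open>q \<in> G\<close> _ r_le] by blast
  have "bdist G p \<le> 3 * r"
    using bdist_le_bdist_add_dist[of G p x] \<open>dist x p \<le> r\<close> near unfolding r_def by (simp add: dist_commute)
  then have "2 ^ k * bdist G p \<le> 2 ^ k * (3 * r)" by simp
  also have "\<dots> \<le> K * r"
    using phi(5) unfolding K_def r_def by (simp add: algebra_simps)
  finally have "2 ^ k * bdist G p \<le> K * r" .
  then have "path_len bt \<le> ennreal (K * r)"
    using bt(5) ennreal_leI order_trans by blast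
  moreover have "r \<le> K * bdist G (bt u)" if "u \<in> {0..1}" for u
  proof -
    have "c * 2 ^ k * bdist G (bt u) \<le> K * bdist G (bt u)"
      unfolding K_def by (intro mult_right_mono bdist_nonneg) auto
    then show ?thesis using bt_bdist[OF that] by linarith
  qed
  moreover have "1 \<le> K"
    unfolding K_def using phi(5) one_le_power[of "2::real" k] mult_mono[of 1 "c + 3" 1 "2 ^ k"] by simp
  ultimately show ?thesis
    using cone_path_detour[OF gm(1) t head tail bt(1,2) bt(3,4)[unfolded p_def q_def]] r_def by auto
qed

lemma exists_short_cone_path:
  fixes G :: "'a::euclidean_space set"
  assumes pos: "\<And>z. z \<in> G \<Longrightarrow> 0 < bdist G z"
    and phi: "phi_uniform \<phi> G" "strict_mono_on {0..} \<phi>" "\<phi> 0 = 0" "\<phi> (3 * c) < k / 2" "0 < c"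
    and cone: "\<exists>g. cone_path G c x y g" and "x \<in> G"
  defines "K \<equiv> (c + 3) * 2 ^ k"
  shows "\<exists>g. cone_path G (max c ((2 + K) * K)) x y g \<and> path_len g \<le> ennreal (max c ((2 + K) * K) * dist x y)"
proof -
  define C where "C = max c ((2 + K) * K)"
  have "1 \<le> K" unfolding K_def using phi(5) mult_mono[of 1 "c + 3" 1 "2 ^ k"] by simp
  then have "2 + K \<le> (2 + K) * K" using mult_left_mono[of 1 K "2 + K"] by simp
  moreover have "c \<le> C" "(2 + K) * K \<le> C" unfolding C_def by simp_all
  ultimately have "2 \<le> C" "2 + K \<le> C" using \<open>1 \<le> K\<close> by linarith+
  then have le_C: "2 * dist x y \<le> C * dist x y" "(2 + K) * dist x y \<le> C * dist x y"
    by (simp_all add: mult_right_mono)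
  obtain gm where gm: "cone_path G c x y gm" using cone by blast
  consider "dist x y \<le> bdist G x / 2" | "path_len gm \<le> ennreal (2 * dist x y)"
    | "bdist G x < 2 * dist x y" "ennreal (2 * dist x y) \<le> path_len gm" by fastforce
  then show ?thesis
  proof cases
    case 1
    then have "cone_path G C x y (linepath x y)" "path_len (linepath x y) = ennreal (dist x y)"
      using cone_path_linepath[OF \<open>x \<in> G\<close>] cone_path_mono[of G 1 x y _ C] \<open>2 \<le> C\<close> by auto
    moreover have "dist x y \<le> C * dist x y" using mult_right_mono[of 1 C "dist x y"] \<open>2 \<le> C\<close> by simp
    ultimately show ?thesis unfolding C_def[symmetric] using ennreal_leI by metis
  next
    case 2
    then show ?thesis
      using cone_path_mono[OF gm \<open>c \<le> C\<close>] le_C unfolding C_def[symmetric] by (meson ennreal_leI order_trans)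
  next
    case 3
    with pos phi gm obtain g where "cone_path G C x y g" "path_len g \<le> ennreal ((2 + K) * dist x y)"
      unfolding C_def K_def by (metis cone_path_shortcut)
    then show ?thesis using le_C unfolding C_def[symmetric] by (meson ennreal_leI order_trans)
  qed
qed

theorem theorem1p2:
  fixes G :: "'a::euclidean_space set" and \<phi> :: "real \<Rightarrow> real"
  assumes "DIM('a) \<ge> 2"
    and "open G" and "connected G" and "G \<noteq> {}" and "G \<noteq> UNIV"
    and "strict_mono_on {0..} \<phi>" and "\<exists>\<psi>. homeomorphism {0..} {0..} \<phi> \<psi>" and "\<phi> 0 = 0"
    and "phi_uniform \<phi> G"
    and "twisted_cone G"
  shows "uniform_domain G"
proof -
  have pos: "\<And>z. z \<in> G \<Longrightarrow> 0 < bdist G z" using bdist_pos_open assms(2,4,5) by blast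
  obtain c where "0 < c" and cone: "\<forall>x\<in>G. \<forall>y\<in>G. \<exists>g. cone_path G c x y g"
    using assms(10) unfolding twisted_cone_iff by blast
  obtain k :: nat where k: "\<phi> (3 * c) < k / 2"
    using reals_Archimedean2[of "2 * \<phi> (3 * c)"] by (auto simp: field_simps)
  define K where "K = (c + 3) * 2 ^ k"
  have "1 \<le> K" unfolding K_def using \<open>0 < c\<close> mult_mono[of 1 "c + 3" 1 "2 ^ k"] by simp
  then have "1 \<le> max c ((2 + K) * K)" using mult_mono[of 1 "2 + K" 1 K] by (simp add: le_max_iff_disj)
  moreover have "\<forall>x\<in>G. \<forall>y\<in>G. \<exists>g. cone_path G (max c ((2 + K) * K)) x y g
      \<and> path_len g \<le> ennreal (max c ((2 + K) * K) * dist x y)"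
    using exists_short_cone_path[OF pos assms(9,6,8) k \<open>0 < c\<close>] cone unfolding K_def by blast
  ultimately show ?thesis unfolding uniform_domain_iff by blast
qed

end
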